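(* Let $\mathbb{Z}[i]$ be the ring of Gaussian integers. For all $r\ge1$ and all primes $p$, $H^2(\Gamma(SL_2(\mathbb{Z}[i]),p^r);\mathbb{F}_p)$ contains a subspace isomorphic to $\mathbb{F}_p\oplus\mathbb{F}_p$; that is, it has dimension at least $2$ over $\mathbb{F}_p$.
   Context: $\Gamma(SL_2(\mathbb{Z}[i]),p^r)=\ker\big(SL_2(\mathbb{Z}[i])\to SL_2(\mathbb{Z}[i]\otimes_{\mathbb{Z}}\mathbb{Z}/p^r)\big)$; cohomology is group cohomology with trivial coefficients $\mathbb{F}_p$. *)

theory Defs
  imports "HOL-Analysis.Analysis" "HOL-Number_Theory.Cong"
begin

definition gauss_int :: "complex \<Rightarrow> bool" where
  "gauss_int z \<longleftrightarrow> Re z \<in> \<int> \<and> Im z \<in> \<int>"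

definition SL2_Zi :: "(complex^2^2) set" where
  "SL2_Zi = {A. (\<forall>i j. gauss_int (A $ i $ j)) \<and> det A = 1}"

text \<open>Principal congruence subgroup of level m: the kernel of reduction
  SL_2(Z[i]) -> SL_2(Z[i]/m Z[i]) = SL_2(Z[i] tensor Z/m), i.e. A = I mod m Z[i].\<close>
definition Gamma_cong :: "nat \<Rightarrow> (complex^2^2) set" where
  "Gamma_cong m = {A \<in> SL2_Zi. \<forall>i j. gauss_int ((A - mat 1) $ i $ j / of_nat m)}"

text \<open>Inhomogeneous 2-cochains of a group (carrier G, multiplication gmul) with
  trivial coefficients in F_p; F_p-values represented by integers modulo p.\<close>
definition cocycle2 :: "('g \<Rightarrow> 'g \<Rightarrow> 'g) \<Rightarrow> 'g set \<Rightarrow> nat \<Rightarrow> ('g \<Rightarrow> 'g \<Rightarrow> int) \<Rightarrow> bool" where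
  "cocycle2 gmul G p f \<longleftrightarrow>
     (\<forall>g\<in>G. \<forall>h\<in>G. \<forall>k\<in>G.
        [f h k - f (gmul g h) k + f g (gmul h k) - f g h = 0] (mod int p))"

definition coboundary2 :: "('g \<Rightarrow> 'g \<Rightarrow> 'g) \<Rightarrow> 'g set \<Rightarrow> nat \<Rightarrow> ('g \<Rightarrow> 'g \<Rightarrow> int) \<Rightarrow> bool" where
  "coboundary2 gmul G p f \<longleftrightarrow>
     (\<exists>\<phi> :: 'g \<Rightarrow> int. \<forall>g\<in>G. \<forall>h\<in>G.
        [f g h = \<phi> h - \<phi> (gmul g h) + \<phi> g] (mod int p))"

text \<open>dim_{F_p} H^2(G; F_p) = Z^2/B^2 is at least 2: there are two cocycles whose
  classes are F_p-linearly independent in Z^2/B^2 (equivalently, H^2 contains a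
  subspace isomorphic to F_p + F_p).\<close>
definition H2_Fp_dim_ge2 :: "('g \<Rightarrow> 'g \<Rightarrow> 'g) \<Rightarrow> 'g set \<Rightarrow> nat \<Rightarrow> bool" where
  "H2_Fp_dim_ge2 gmul G p \<longleftrightarrow>
     (\<exists>c1 c2. cocycle2 gmul G p c1 \<and> cocycle2 gmul G p c2 \<and>
        (\<forall>a b :: int. coboundary2 gmul G p (\<lambda>g h. a * c1 g h + b * c2 g h) \<longrightarrow>
             [a = 0] (mod int p) \<and> [b = 0] (mod int p)))"

end

theory Submission imports Defs begin

text \<open>For \<open>A \<in> \<Gamma>(m)\<close> write \<open>A = I + m X\<close> with \<open>X\<close> Gaussian-integral. Then \<open>AB = I + m (X + Y + m XY)\<close>,
  so the real and imaginary parts of each entry of \<open>X\<close> are homomorphisms \<open>\<Gamma>(m) \<rightarrow> \<int>/m \<rightarrow> \<int>/p\<close>.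
  Cup products of such homomorphisms are 2-cocycles. A coboundary is symmetric on commuting
  pairs, whereas the cup product of the two upper-right coordinates takes the values 1 and 0 on
  the commuting pair \<open>(I + m E\<^sub>1\<^sub>2, I + m i E\<^sub>1\<^sub>2)\<close> in the two orders; the lower-left coordinates
  behave likewise on lower unipotent matrices, which separates the two classes.\<close>

lemma gauss_int_add [intro]: "gauss_int x \<Longrightarrow> gauss_int y \<Longrightarrow> gauss_int (x + y)"
  by (simp add: gauss_int_def)

lemma gauss_int_mult [intro]: "gauss_int x \<Longrightarrow> gauss_int y \<Longrightarrow> gauss_int (x * y)"
  by (simp add: gauss_int_def)

lemma gauss_int_simps [simp]: "gauss_int 0" "gauss_int 1" "gauss_int \<i>" "gauss_int (of_nat n)"
  by (auto simp: gauss_int_def)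

definition hom_mod :: "('g \<Rightarrow> 'g \<Rightarrow> 'g) \<Rightarrow> 'g set \<Rightarrow> nat \<Rightarrow> ('g \<Rightarrow> int) \<Rightarrow> bool" where
  "hom_mod gmul G p \<alpha> \<longleftrightarrow> (\<forall>g\<in>G. \<forall>h\<in>G. [\<alpha> (gmul g h) = \<alpha> g + \<alpha> h] (mod int p))"

lemma hom_mod_dvd_modulus:
  assumes "hom_mod gmul G m \<alpha>" "p dvd m"
  shows "hom_mod gmul G p \<alpha>"
  using assms unfolding hom_mod_def by (metis cong_dvd_modulus of_nat_dvd_iff)

lemma cup_product_cocycle2:
  assumes \<alpha>: "hom_mod gmul G p \<alpha>" and \<beta>: "hom_mod gmul G p \<beta>"
  shows "cocycle2 gmul G p (\<lambda>g h. \<alpha> g * \<beta> h)"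
  unfolding cocycle2_def cong_0_iff
proof (intro ballI)
  fix g h k assume g: "g \<in> G" and h: "h \<in> G" and k: "k \<in> G"
  have "p dvd (\<alpha> (gmul g h) - \<alpha> g - \<alpha> h)" "p dvd (\<beta> (gmul h k) - \<beta> h - \<beta> k)"
    using \<alpha> \<beta> g h k by (auto simp: hom_mod_def cong_iff_dvd_diff algebra_simps)
  moreover have "\<alpha> h * \<beta> k - \<alpha> (gmul g h) * \<beta> k + \<alpha> g * \<beta> (gmul h k) - \<alpha> g * \<beta> h
      = \<alpha> g * (\<beta> (gmul h k) - \<beta> h - \<beta> k) - (\<alpha> (gmul g h) - \<alpha> g - \<alpha> h) * \<beta> k"
    by (simp add: algebra_simps)
  ultimately show "int p dvd (\<alpha> h * \<beta> k - \<alpha> (gmul g h) * \<beta> k + \<alpha> g * \<beta> (gmul h k) - \<alpha> g * \<beta> h)"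
    by simp
qed

lemma coboundary2_symmetric_on_commuting:
  assumes "coboundary2 gmul G p f" "g \<in> G" "h \<in> G" "gmul g h = gmul h g"
  shows "[f g h = f h g] (mod int p)"
proof -
  obtain \<phi> where \<phi>: "\<forall>g\<in>G. \<forall>h\<in>G. [f g h = \<phi> h - \<phi> (gmul g h) + \<phi> g] (mod int p)"
    using assms(1) unfolding coboundary2_def by blast
  have "[f g h = \<phi> h - \<phi> (gmul g h) + \<phi> g] (mod int p)" "[f h g = \<phi> g - \<phi> (gmul h g) + \<phi> h] (mod int p)"
    using \<phi> assms(2,3) by auto
  with assms(4) show ?thesis
    by (metis (no_types, lifting) add.commute cong_sym cong_trans diff_add_eq)
qed

lemma H2_Fp_dim_ge2_by_commuting_pairs:
  assumes "cocycle2 gmul G p c1" "cocycle2 gmul G p c2"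
    and "g \<in> G" "h \<in> G" "gmul g h = gmul h g"
    and "g' \<in> G" "h' \<in> G" "gmul g' h' = gmul h' g'"
    and "c1 g h - c1 h g = 1" "c2 g h - c2 h g = 0"
    and "c1 g' h' - c1 h' g' = 0" "c2 g' h' - c2 h' g' = 1"
  shows "H2_Fp_dim_ge2 gmul G p"
  unfolding H2_Fp_dim_ge2_def
proof (intro exI conjI allI impI)
  fix a b :: int
  let ?f = "\<lambda>g h. a * c1 g h + b * c2 g h"
  assume cb: "coboundary2 gmul G p ?f"
  have "?f g h - ?f h g = a" "?f g' h' - ?f h' g' = b"
    using assms(9-12) by (simp_all add: algebra_simps)
  moreover have "[?f g h - ?f h g = 0] (mod int p)" "[?f g' h' - ?f h' g' = 0] (mod int p)"
    using coboundary2_symmetric_on_commuting[OF cb] assms(3-8) by (auto simp: cong_iff_dvd_diff)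
  ultimately show "[a = 0] (mod int p)" "[b = 0] (mod int p)" by simp_all
qed (use assms in auto)

definition level_coord :: "nat \<Rightarrow> complex^2^2 \<Rightarrow> 2 \<Rightarrow> 2 \<Rightarrow> complex" where
  "level_coord m A i j = (A - mat 1) $ i $ j / of_nat m"

lemma gauss_int_level_coord: "A \<in> Gamma_cong m \<Longrightarrow> gauss_int (level_coord m A i j)"
  by (simp add: Gamma_cong_def level_coord_def)

lemma entry_eq_level_coord:
  "m > 0 \<Longrightarrow> A $ i $ j = (if i = j then 1 else 0) + of_nat m * level_coord m A i j"
  by (simp add: level_coord_def mat_def)

lemma level_coord_mult:
  assumes "m > 0"
  shows "level_coord m (A ** B) i j
       = level_coord m A i j + level_coord m B i j
         + of_nat m * (\<Sum>k\<in>UNIV. level_coord m A i k * level_coord m B k j)"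
proof -
  have e: "\<And>C i j. C $ i $ j = (if i = j then 1 else 0) + of_nat m * level_coord m C i j"
    using assms entry_eq_level_coord by blast
  have "(if i = j then 1 else 0) + of_nat m * level_coord m (A ** B) i j
      = (\<Sum>k\<in>UNIV. A $ i $ k * B $ k $ j)"
    by (simp add: e[symmetric] matrix_matrix_mult_def)
  also have "\<dots> = (if i = j then 1 else 0) + of_nat m * (level_coord m A i j + level_coord m B i j
       + of_nat m * (\<Sum>k\<in>UNIV. level_coord m A i k * level_coord m B k j))"
    by (subst (1 2) e) (use exhaust_2[of i] exhaust_2[of j] in \<open>auto simp: sum_2 algebra_simps\<close>)
  finally show ?thesis using assms by simp
qed

lemma floor_add_mod:
  assumes "x \<in> \<int>" "y \<in> \<int>" "w \<in> \<int>"
  shows "[\<lfloor>x + y + real m * w\<rfloor> = \<lfloor>x\<rfloor> + \<lfloor>y\<rfloor>] (mod int m)"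
proof -
  obtain a b c where "x = of_int a" "y = of_int b" "w = of_int c"
    using assms by (metis Ints_cases)
  then have "x + y + real m * w = of_int (a + b + int m * c)" by simp
  with \<open>x = of_int a\<close> \<open>y = of_int b\<close> show ?thesis
    by (simp only: floor_of_int) (simp add: cong_iff_dvd_diff)
qed

lemma hom_mod_level_coord:
  assumes "m > 0" "cp \<in> {Re, Im}"
  shows "hom_mod (**) (Gamma_cong m) m (\<lambda>A. \<lfloor>cp (level_coord m A i j)\<rfloor>)"
  unfolding hom_mod_def
proof (intro ballI)
  fix A B assume A: "A \<in> Gamma_cong m" and B: "B \<in> Gamma_cong m"
  define S where "S = (\<Sum>k\<in>UNIV. level_coord m A i k * level_coord m B k j)"
  have "gauss_int S"
    unfolding S_def using gauss_int_level_coord[OF A] gauss_int_level_coord[OF B]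
    by (simp add: sum_2 gauss_int_add gauss_int_mult)
  moreover have "cp (level_coord m (A ** B) i j)
      = cp (level_coord m A i j) + cp (level_coord m B i j) + real m * cp S"
    using assms by (auto simp: level_coord_mult S_def)
  ultimately show "[\<lfloor>cp (level_coord m (A ** B) i j)\<rfloor>
            = \<lfloor>cp (level_coord m A i j)\<rfloor> + \<lfloor>cp (level_coord m B i j)\<rfloor>] (mod int m)"
    using assms(2) gauss_int_level_coord[OF A, of i j] gauss_int_level_coord[OF B, of i j]
    by (auto simp: gauss_int_def intro!: floor_add_mod)
qed

definition upper_unipotent :: "nat \<Rightarrow> complex \<Rightarrow> complex^2^2" where
  "upper_unipotent m z = (\<chi> i j. if i = j then 1 else if i = 1 then of_nat m * z else 0)"

definition lower_unipotent :: "nat \<Rightarrow> complex \<Rightarrow> complex^2^2" where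
  "lower_unipotent m z = (\<chi> i j. if i = j then 1 else if i = 2 then of_nat m * z else 0)"

lemma upper_unipotent_in_Gamma_cong: "gauss_int z \<Longrightarrow> upper_unipotent m z \<in> Gamma_cong m"
  by (auto simp: Gamma_cong_def SL2_Zi_def upper_unipotent_def det_2 forall_2 mat_def)

lemma lower_unipotent_in_Gamma_cong: "gauss_int z \<Longrightarrow> lower_unipotent m z \<in> Gamma_cong m"
  by (auto simp: Gamma_cong_def SL2_Zi_def lower_unipotent_def det_2 forall_2 mat_def)

lemma upper_unipotent_commute:
  "upper_unipotent m z ** upper_unipotent m w = upper_unipotent m w ** upper_unipotent m z"
  by (simp add: upper_unipotent_def vec_eq_iff forall_2 matrix_matrix_mult_def sum_2 algebra_simps)

lemma lower_unipotent_commute: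
  "lower_unipotent m z ** lower_unipotent m w = lower_unipotent m w ** lower_unipotent m z"
  by (simp add: lower_unipotent_def vec_eq_iff forall_2 matrix_matrix_mult_def sum_2 algebra_simps)

lemma level_coord_upper_unipotent [simp]:
  "m > 0 \<Longrightarrow> level_coord m (upper_unipotent m z) 1 2 = z"
  "level_coord m (upper_unipotent m z) 2 1 = 0"
  by (auto simp: level_coord_def upper_unipotent_def mat_def)

lemma level_coord_lower_unipotent [simp]:
  "m > 0 \<Longrightarrow> level_coord m (lower_unipotent m z) 2 1 = z"
  "level_coord m (lower_unipotent m z) 1 2 = 0"
  by (auto simp: level_coord_def lower_unipotent_def mat_def)

theorem theorem6p1:
  fixes p r :: nat
  assumes "prime p" and "r \<ge> 1"
  shows "H2_Fp_dim_ge2 (**) (Gamma_cong (p ^ r)) p"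
proof -
  define m where "m = p ^ r"
  have "m > 0" using assms(1) prime_gt_0_nat m_def by simp
  have "p dvd m" using assms(2) unfolding m_def by (simp add: dvd_power_iff_le)
  define coord :: "(complex \<Rightarrow> real) \<Rightarrow> 2 \<Rightarrow> 2 \<Rightarrow> complex^2^2 \<Rightarrow> int"
    where "coord cp i j A = \<lfloor>cp (level_coord m A i j)\<rfloor>" for cp i j A
  have hom: "hom_mod (**) (Gamma_cong m) p (coord cp i j)" if "cp \<in> {Re, Im}" for cp i j
    unfolding coord_def
    using hom_mod_dvd_modulus[OF hom_mod_level_coord[OF \<open>m > 0\<close> that] \<open>p dvd m\<close>] .
  show ?thesis
    unfolding m_def[symmetric]
  proof (rule H2_Fp_dim_ge2_by_commuting_pairs
      [where g = "upper_unipotent m 1" and h = "upper_unipotent m \<i>"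
         and g' = "lower_unipotent m 1" and h' = "lower_unipotent m \<i>"])
    show "cocycle2 (**) (Gamma_cong m) p (\<lambda>A B. coord Re 1 2 A * coord Im 1 2 B)"
         "cocycle2 (**) (Gamma_cong m) p (\<lambda>A B. coord Re 2 1 A * coord Im 2 1 B)"
      by (simp_all add: cup_product_cocycle2 hom)
  qed (use \<open>m > 0\<close> in \<open>simp_all add: coord_def upper_unipotent_in_Gamma_cong
         lower_unipotent_in_Gamma_cong upper_unipotent_commute lower_unipotent_commute\<close>)
qed

end
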